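(* For $n\le 3$ there is no $[[n,1,3;1]]$ entanglement-assisted stabilizer code (CSS or not): there do not exist $n$ independent pairwise commuting Pauli operators on $n+1$ qubits (qubits $1,\dots,n$ held by Alice, qubit $n+1$ held by Bob), exactly one acting as $X$ on Bob's qubit, exactly one as $Z$, and the rest trivially there, such that for every pair $E_a,E_b\in\{I\}\cup\{X_i,Y_i,Z_i:1\le i\le n\}$ of errors on Alice's qubits, $E_a^\dagger E_b$ either anticommutes with some generator or lies (up to phase) in the generated group.
   Context: $X,Y,Z$ are the single-qubit Pauli matrices and $P_i$ denotes the operator acting as $P$ on qubit $i$ and as identity elsewhere. *)

theory Defs
  imports Main
begin

text \<open>Single-qubit Pauli matrices modulo global phase.\<close>
datatype pauli = PI | PX | PY | PZ

fun pmul :: "pauli \<Rightarrow> pauli \<Rightarrow> pauli" where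
  "pmul PI p = p"
| "pmul p PI = p"
| "pmul PX PX = PI" | "pmul PY PY = PI" | "pmul PZ PZ = PI"
| "pmul PX PY = PZ" | "pmul PY PX = PZ"
| "pmul PY PZ = PX" | "pmul PZ PY = PX"
| "pmul PZ PX = PY" | "pmul PX PZ = PY"

text \<open>A multi-qubit Pauli operator (up to phase): qubit index \<Rightarrow> single-qubit Pauli;
  qubits are numbered from 0.\<close>
type_synonym pauli_op = "nat \<Rightarrow> pauli"

definition op_mul :: "pauli_op \<Rightarrow> pauli_op \<Rightarrow> pauli_op" where
  "op_mul P Q = (\<lambda>i. pmul (P i) (Q i))"

definition op_id :: pauli_op where
  "op_id = (\<lambda>_. PI)"

definition supported_on :: "nat \<Rightarrow> pauli_op \<Rightarrow> bool" where
  "supported_on m P \<longleftrightarrow> (\<forall>i\<ge>m. P i = PI)"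

definition anti1 :: "pauli \<Rightarrow> pauli \<Rightarrow> bool" where
  "anti1 p q \<longleftrightarrow> p \<noteq> PI \<and> q \<noteq> PI \<and> p \<noteq> q"

text \<open>Two operators supported on {0..<m} commute iff they anticommute on an even number of qubits.\<close>
definition commute_on :: "nat \<Rightarrow> pauli_op \<Rightarrow> pauli_op \<Rightarrow> bool" where
  "commute_on m P Q \<longleftrightarrow> even (card {i. i < m \<and> anti1 (P i) (Q i)})"

inductive_set gen_group :: "pauli_op set \<Rightarrow> pauli_op set" for G where
  gen_id: "op_id \<in> gen_group G"
| gen_base: "g \<in> G \<Longrightarrow> g \<in> gen_group G"
| gen_mul: "a \<in> gen_group G \<Longrightarrow> b \<in> gen_group G \<Longrightarrow> op_mul a b \<in> gen_group G"

definition single :: "nat \<Rightarrow> pauli \<Rightarrow> pauli_op" where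
  "single i p = (\<lambda>j. if j = i then p else PI)"

definition alice_errors :: "nat \<Rightarrow> pauli_op set" where
  "alice_errors n = {op_id} \<union> {single i p | i p. i < n \<and> p \<in> {PX, PY, PZ}}"

text \<open>An [[n,1,3;1]] entanglement-assisted stabilizer code: n generators on n+1 qubits
  (Alice: 0..<n, Bob: qubit n).\<close>
definition EA_code_n13_1 :: "nat \<Rightarrow> pauli_op list \<Rightarrow> bool" where
  "EA_code_n13_1 n gens \<longleftrightarrow>
     length gens = n \<and> distinct gens
   \<and> (\<forall>g\<in>set gens. supported_on (n+1) g)
   \<and> (\<forall>g\<in>set gens. g \<notin> gen_group (set gens - {g}))
   \<and> (\<forall>g\<in>set gens. \<forall>h\<in>set gens. commute_on (n+1) g h)
   \<and> card {g\<in>set gens. g n = PX} = 1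
   \<and> card {g\<in>set gens. g n = PZ} = 1
   \<and> (\<forall>g\<in>set gens. g n \<in> {PI, PX, PZ})
   \<and> (\<forall>Ea\<in>alice_errors n. \<forall>Eb\<in>alice_errors n.
        (\<exists>g\<in>set gens. \<not> commute_on (n+1) (op_mul Ea Eb) g)
        \<or> op_mul Ea Eb \<in> gen_group (set gens))"

end

theory Submission
  imports Defs
begin

text \<open>
  The code must contain a generator acting as X and one acting as Z on Bob's qubit. For \<open>n \<le> 3\<close>
  at most one further generator \<open>c\<close> remains; it acts trivially on Bob's qubit and, being independent,
  nontrivially on some Alice qubit. Choose two Alice qubits \<open>j, k\<close> avoiding that qubit. The 16 Paulis
  supported on \<open>j, k\<close> map additively onto the 8 possible commutation patterns with three operators,
  so some nontrivial such Pauli \<open>E = E\<^sub>a E\<^sub>b\<close> commutes with all generators. As \<open>E\<close> is trivial on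
  Bob's qubit, it could only lie in the stabilizer group if it were the identity or \<open>c\<close>, which it is not.
\<close>

lemma pmul_comm: "pmul p q = pmul q p"
  by (cases p; cases q; simp)

lemma pmul_assoc: "pmul (pmul p q) r = pmul p (pmul q r)"
  by (cases p; cases q; cases r; simp)

lemma pmul_self [simp]: "pmul p p = PI"
  by (cases p; simp)

lemma pmul_PI_right [simp]: "pmul p PI = p"
  by (cases p; simp)

lemma op_mul_apply: "op_mul P Q i = pmul (P i) (Q i)"
  by (simp add: op_mul_def)

lemma op_id_apply: "op_id i = PI"
  by (simp add: op_id_def)

lemma op_mul_comm: "op_mul P Q = op_mul Q P"
  by (simp add: op_mul_def pmul_comm)

lemma op_mul_assoc: "op_mul (op_mul P Q) R = op_mul P (op_mul Q R)"
  by (simp add: op_mul_def pmul_assoc)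

lemma op_mul_self: "op_mul P P = op_id"
  by (simp add: op_mul_def op_id_def)

lemma op_mul_id_left [simp]: "op_mul op_id P = P"
  by (simp add: op_mul_def op_id_def)

lemma gen_group_empty: "gen_group {} = {op_id}"
proof -
  have "h = op_id" if "h \<in> gen_group {}" for h
    using that by induct simp_all
  then show ?thesis
    by (auto intro: gen_group.gen_id)
qed

lemma gen_group_mono:
  assumes "S \<subseteq> T"
  shows "gen_group S \<subseteq> gen_group T"
proof
  fix h assume "h \<in> gen_group S"
  then show "h \<in> gen_group T"
    by induct (use assms in \<open>auto intro: gen_group.intros\<close>)
qed

lemma gen_group_insert_subset:
  "gen_group (insert a S) \<subseteq> gen_group S \<union> op_mul a ` gen_group S"
proof
  fix h assume "h \<in> gen_group (insert a S)"
  then show "h \<in> gen_group S \<union> op_mul a ` gen_group S"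
  proof induct
    case gen_id
    show ?case by (blast intro: gen_group.gen_id)
  next
    case (gen_base g)
    then show ?case
      by (auto intro: gen_group.intros image_eqI[of _ _ op_id] simp: op_mul_comm[of a])
  next
    case (gen_mul u v)
    have swap: "op_mul u (op_mul a w) = op_mul a (op_mul u w)" for w
      by (metis op_mul_assoc op_mul_comm)
    have cancel: "op_mul a (op_mul w (op_mul a w')) = op_mul w w'" for w w'
      by (metis op_mul_assoc op_mul_comm op_mul_self op_mul_id_left)
    from gen_mul.hyps(2,4) show ?case
      by (auto simp: op_mul_assoc swap cancel intro: gen_group.gen_mul)
  qed
qed

lemma gen_group_bob_trivial:
  assumes "h \<in> gen_group {a, b, c}" "a n = PX" "b n = PZ" "c n = PI" "h n = PI"
  shows "h = op_id \<or> h = c"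
proof -
  have "gen_group {c} \<subseteq> {op_id, c}"
    using gen_group_insert_subset[of c "{}"] by (auto simp: gen_group_empty op_mul_comm[of c])
  then have "h \<in> {op_id, c} \<union> op_mul b ` {op_id, c} \<union> op_mul a ` ({op_id, c} \<union> op_mul b ` {op_id, c})"
    using assms(1) gen_group_insert_subset[of a "{b, c}"] gen_group_insert_subset[of b "{c}"]
    by blast
  then show ?thesis
    using assms(2-) by (auto simp: op_mul_apply op_id_apply)
qed

lemma single_in_alice_errors: "i < n \<Longrightarrow> single i p \<in> alice_errors n"
  by (cases p) (auto simp: alice_errors_def single_def op_id_def)

lemma commute_on_two_qubit_error:
  assumes "j \<noteq> k" "j < m" "k < m"
  shows "commute_on m (op_mul (single j p) (single k q)) g \<longleftrightarrow> (anti1 p (g j) \<longleftrightarrow> anti1 q (g k))"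
proof -
  have "{i. i < m \<and> anti1 (op_mul (single j p) (single k q) i) (g i)}
      = (if anti1 p (g j) then {j} else {}) \<union> (if anti1 q (g k) then {k} else {})"
    using assms by (auto simp: op_mul_apply single_def anti1_def)
  then show ?thesis
    using assms(1) by (simp add: commute_on_def)
qed

lemma ex_pauli: "(\<exists>p::pauli. P p) \<longleftrightarrow> P PI \<or> P PX \<or> P PY \<or> P PZ"
  by (metis pauli.exhaust)

lemma two_qubit_pauli_commuting_with_three:
  "\<exists>p q. (p \<noteq> PI \<or> q \<noteq> PI)
     \<and> (anti1 p a1 \<longleftrightarrow> anti1 q a2) \<and> (anti1 p b1 \<longleftrightarrow> anti1 q b2) \<and> (anti1 p c1 \<longleftrightarrow> anti1 q c2)"
  by (cases a1; cases a2; cases b1; cases b2; cases c1; cases c2;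
      simp only: ex_pauli anti1_def pauli.distinct simp_thms)

lemma undetectable_two_qubit_error:
  assumes jk: "j \<noteq> k" "j < n" "k < n"
    and S: "S \<subseteq> {a, b, c}" and bob: "a n = PX" "b n = PZ" "c n = PI"
    and c_support: "c = op_id \<or> (\<exists>i. i \<noteq> j \<and> i \<noteq> k \<and> c i \<noteq> PI)"
  obtains Ea Eb where "Ea \<in> alice_errors n" "Eb \<in> alice_errors n"
    "\<forall>g\<in>S. commute_on (n+1) (op_mul Ea Eb) g" "op_mul Ea Eb \<notin> gen_group S"
proof -
  obtain p q where nontrivial: "p \<noteq> PI \<or> q \<noteq> PI"
    and syndrome: "anti1 p (a j) \<longleftrightarrow> anti1 q (a k)" "anti1 p (b j) \<longleftrightarrow> anti1 q (b k)"
      "anti1 p (c j) \<longleftrightarrow> anti1 q (c k)"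
    using two_qubit_pauli_commuting_with_three by blast
  define E where "E = op_mul (single j p) (single k q)"
  have E_apply: "E i = (if i = j then p else if i = k then q else PI)" for i
    using jk(1) by (simp add: E_def op_mul_apply single_def)
  have commute: "\<forall>g\<in>S. commute_on (n+1) E g"
    using S syndrome jk commute_on_two_qubit_error[of j k "n+1" p q] by (auto simp: E_def)
  have "E \<notin> gen_group {a, b, c}"
  proof
    assume "E \<in> gen_group {a, b, c}"
    moreover have "E n = PI"
      using jk by (simp add: E_apply)
    ultimately have "E = op_id \<or> E = c"
      using gen_group_bob_trivial bob by blast
    moreover have "E j \<noteq> PI \<or> E k \<noteq> PI"
      using nontrivial jk(1) by (simp add: E_apply)
    then have "E \<noteq> op_id"
      by (auto simp: op_id_apply)
    ultimately show False
      using c_support E_apply by auto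
  qed
  then have "E \<notin> gen_group S"
    using gen_group_mono[OF S] by blast
  with commute show thesis
    using that[of "single j p" "single k q"] single_in_alice_errors jk by (simp add: E_def)
qed

lemma EA_code_n13_1_bob_generators:
  assumes "EA_code_n13_1 n gens"
  obtains gx gz where "gx \<in> set gens" "gz \<in> set gens" "gx n = PX" "gz n = PZ"
    "\<forall>g\<in>set gens - {gx, gz}. g n = PI"
proof -
  from assms have "card {g\<in>set gens. g n = PX} = 1" "card {g\<in>set gens. g n = PZ} = 1"
    and bob: "\<forall>g\<in>set gens. g n \<in> {PI, PX, PZ}"
    unfolding EA_code_n13_1_def by simp_all
  then obtain gx gz where gx: "{g\<in>set gens. g n = PX} = {gx}" and gz: "{g\<in>set gens. g n = PZ} = {gz}"
    by (meson card_1_singletonE)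
  then have "gx \<in> set gens" "gz \<in> set gens" "gx n = PX" "gz n = PZ"
    by blast+
  moreover have "\<forall>g\<in>set gens - {gx, gz}. g n = PI"
    using bob gx gz by blast
  ultimately show thesis
    by (rule that)
qed

lemma EA_code_n13_1_generator_acts_on_alice:
  assumes "EA_code_n13_1 n gens" "g \<in> set gens" "g n = PI"
  obtains i where "i < n" "g i \<noteq> PI"
proof -
  from assms(1,2) have support: "supported_on (n+1) g" and independent: "g \<notin> gen_group (set gens - {g})"
    unfolding EA_code_n13_1_def by simp_all
  then have "g \<noteq> op_id"
    using gen_group.gen_id by blast
  then obtain i where i: "g i \<noteq> PI"
    by (auto simp: op_id_def)
  have "i < n"
  proof (rule ccontr)
    assume "\<not> i < n"
    with i assms(3) have "n + 1 \<le> i"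
      by (cases "i = n") auto
    with support i show False
      by (simp add: supported_on_def)
  qed
  then show thesis
    using that i by blast
qed

lemma EA_code_n13_1_card: "EA_code_n13_1 n gens \<Longrightarrow> card (set gens) = n"
  unfolding EA_code_n13_1_def by (elim conjE) (simp add: distinct_card)

lemma EA_code_n13_1_detects:
  assumes "EA_code_n13_1 n gens" "Ea \<in> alice_errors n" "Eb \<in> alice_errors n"
    and "\<forall>g\<in>set gens. commute_on (n+1) (op_mul Ea Eb) g"
  shows "op_mul Ea Eb \<in> gen_group (set gens)"
proof -
  from assms(1) have "\<forall>Ea\<in>alice_errors n. \<forall>Eb\<in>alice_errors n.
      (\<exists>g\<in>set gens. \<not> commute_on (n+1) (op_mul Ea Eb) g) \<or> op_mul Ea Eb \<in> gen_group (set gens)"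
    unfolding EA_code_n13_1_def by (elim conjE)
  then show ?thesis
    using assms(2-4) by blast
qed

lemma not_EA_code_n13_1_within_three_generators:
  assumes "j \<noteq> k" "j < n" "k < n" "set gens \<subseteq> {gx, gz, c}" "gx n = PX" "gz n = PZ" "c n = PI"
    and "c = op_id \<or> (\<exists>i. i \<noteq> j \<and> i \<noteq> k \<and> c i \<noteq> PI)"
  shows "\<not> EA_code_n13_1 n gens"
proof
  assume code: "EA_code_n13_1 n gens"
  obtain Ea Eb where "Ea \<in> alice_errors n" "Eb \<in> alice_errors n"
    "\<forall>g\<in>set gens. commute_on (n+1) (op_mul Ea Eb) g" "op_mul Ea Eb \<notin> gen_group (set gens)"
    using undetectable_two_qubit_error[OF assms] by blast
  then show False
    using EA_code_n13_1_detects[OF code] by blast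
qed

lemma EA_code_n13_1_two_le:
  assumes "EA_code_n13_1 n gens"
  shows "2 \<le> n"
proof -
  obtain gx gz where "gx \<in> set gens" "gz \<in> set gens" "gx n = PX" "gz n = PZ"
    using EA_code_n13_1_bob_generators[OF assms] by blast
  then have "{gx, gz} \<subseteq> set gens" "card {gx, gz} = 2"
    by (auto simp: card_insert_if)
  then show ?thesis
    using card_mono[OF List.finite_set] EA_code_n13_1_card[OF assms] by metis
qed

lemma not_EA_code_n13_1_2: "\<not> EA_code_n13_1 2 gens"
proof
  assume code: "EA_code_n13_1 2 gens"
  then obtain gx gz where gx: "gx \<in> set gens" "gx 2 = PX" and gz: "gz \<in> set gens" "gz 2 = PZ"
    and "\<forall>g\<in>set gens - {gx, gz}. g 2 = PI"
    by (rule EA_code_n13_1_bob_generators)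
  then have gxz: "{gx, gz} \<subseteq> set gens" "card {gx, gz} = 2"
    by (auto simp: card_insert_if)
  then have "set gens = {gx, gz}"
    using card_subset_eq[OF List.finite_set gxz(1)] EA_code_n13_1_card[OF code] by simp
  then have gens: "set gens \<subseteq> {gx, gz, op_id}"
    by blast
  have "\<not> EA_code_n13_1 2 gens"
    using not_EA_code_n13_1_within_three_generators[OF _ _ _ gens gx(2) gz(2) op_id_apply, of 0 1]
    by simp
  then show False
    using code by contradiction
qed

lemma not_EA_code_n13_1_3: "\<not> EA_code_n13_1 3 gens"
proof
  assume code: "EA_code_n13_1 3 gens"
  then obtain gx gz where gx: "gx \<in> set gens" "gx 3 = PX" and gz: "gz \<in> set gens" "gz 3 = PZ"
    and rest: "\<forall>g\<in>set gens - {gx, gz}. g 3 = PI"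
    by (rule EA_code_n13_1_bob_generators)
  then have gxz: "{gx, gz} \<subseteq> set gens" "card {gx, gz} = 2"
    by (auto simp: card_insert_if)
  then have "card (set gens - {gx, gz}) = 1"
    using card_Diff_subset[OF _ gxz(1)] EA_code_n13_1_card[OF code] by simp
  then obtain c where c: "set gens - {gx, gz} = {c}"
    by (rule card_1_singletonE)
  then have "c \<in> set gens" and c_bob: "c 3 = PI"
    using rest by auto
  then obtain i where i: "i < 3" "c i \<noteq> PI"
    by (rule EA_code_n13_1_generator_acts_on_alice[OF code])
  define j k :: nat where "j = (if i = 0 then 1 else 0)" and "k = (if i = 2 then 1 else 2)"
  have jk: "j \<noteq> k" "j < 3" "k < 3" "i \<noteq> j" "i \<noteq> k"
    using i(1) by (auto simp: j_def k_def)
  have gens: "set gens \<subseteq> {gx, gz, c}"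
    using c by blast
  have "\<not> EA_code_n13_1 3 gens"
    using not_EA_code_n13_1_within_three_generators[OF jk(1-3) gens gx(2) gz(2) c_bob] jk(4,5) i(2)
    by blast
  then show False
    using code by contradiction
qed

theorem mainTheorem8:
  fixes n :: nat
  assumes "n \<le> 3"
  shows "\<not> (\<exists>gens. EA_code_n13_1 n gens)"
proof
  assume "\<exists>gens. EA_code_n13_1 n gens"
  then obtain gens where code: "EA_code_n13_1 n gens" ..
  then have "2 \<le> n"
    by (rule EA_code_n13_1_two_le)
  with assms have "n = 2 \<or> n = 3"
    by linarith
  then show False
    using code not_EA_code_n13_1_2 not_EA_code_n13_1_3 by blast
qed

end
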